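(* Under (B.1), (B.2), (B.3), the minimax solution $\varphi$ of the problem $\partial_t\varphi+H(t,x(\cdot),\nabla\varphi)=0$ on $[0,T)\times C([-h,T],\mathbb{R}^n)$, $\varphi(T,x(\cdot))=\sigma(x(\cdot))$, is a viscosity solution, i.e. it satisfies: (V$^*$) for every $ci$-smooth $\psi:[0,T]\times C([-h,T],\mathbb{R}^n)\to\mathbb{R}$, if $\varphi-\psi$ attains a local minimum (with respect to the metric $\mathrm{dist}$) at a point $(t,x(\cdot))\in[0,T)\times C([-h,T],\mathbb{R}^n)$, then $\partial_t\psi(t,x(\cdot))+H(t,x(\cdot),\nabla\psi(t,x(\cdot)))\le0$; (V$_*$) for every $ci$-smooth $\psi$, if $\varphi-\psi$ attains a local maximum at a point $(t,x(\cdot))\in[0,T)\times C([-h,T],\mathbb{R}^n)$, then $\partial_t\psi(t,x(\cdot))+H(t,x(\cdot),\nabla\psi(t,x(\cdot)))\ge0$.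
   Context: Fix $n\in\mathbb{N}$, $h>0$, $T>0$; $\langle\cdot,\cdot\rangle$, $\|\cdot\|$ Euclidean. $C([-h,T],\mathbb{R}^n)$ has the sup norm $\|\cdot\|_{[-h,T]}$; $[0,T]\times C([-h,T],\mathbb{R}^n)$ has the metric $\mathrm{dist}((t,x(\cdot)),(\tau,y(\cdot)))=|t-\tau|+\|x(\cdot)-y(\cdot)\|_{[-h,T]}$. Non-anticipative: $\varphi(t,x(\cdot))=\varphi(t,y(\cdot))$ whenever $t\in[0,T)$ and $x=y$ on $[-h,t]$. $\mathrm{Lip}(t,x(\cdot))$: the $y(\cdot)\in C([-h,T],\mathbb{R}^n)$ with $y=x$ on $[-h,t]$, Lipschitz on $[t,T]$. $ci$-differentiable at $(t,x(\cdot))$, $t<T$: there exist $\partial_t\varphi(t,x(\cdot))\in\mathbb{R}$, $\nabla\varphi(t,x(\cdot))\in\mathbb{R}^n$ with $\varphi(\tau,y(\cdot))-\varphi(t,x(\cdot))=\partial_t\varphi(t,x(\cdot))(\tau-t)+\langle\nabla\varphi(t,x(\cdot)),y(\tau)-x(t)\rangle+o(\tau-t)$, $\tau\in(t,T]$, for every $y(\cdot)\in\mathrm{Lip}(t,x(\cdot))$, $o(\delta)/\delta\to0$ as $\delta\downarrow0$ ($o$ may depend on $y$). $ci$-smooth: continuous, $ci$-differentiable at every point of $[0,T)\times C([-h,T],\mathbb{R}^n)$, with $\partial_t\varphi$ and $\nabla\varphi$ continuous there. (B.1) $H,\sigma$ continuous; (B.2) there is $c>0$ with $|H(t,x(\cdot),s)-H(t,x(\cdot),r)|\le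 c(1+\max_{\tau\in[-h,t]}\|x(\tau)\|)\|s-r\|$ for all $t,x(\cdot),s,r$; (B.3) for every compact $D\subset C([-h,T],\mathbb{R}^n)$ there is $\lambda>0$ with $|H(t,x(\cdot),s)-H(t,y(\cdot),s)|\le\lambda(1+\|s\|)\max_{\tau\in[-h,t]}\|x(\tau)-y(\tau)\|$ for all $t\in[0,T]$, $x(\cdot),y(\cdot)\in D$, $s$. $Y(t,x(\cdot))$: the $y(\cdot)\in\mathrm{Lip}(t,x(\cdot))$ with $\|\dot y(\tau)\|\le c(1+\max_{\xi\in[-h,\tau]}\|y(\xi)\|)$ for a.e. $\tau\in[t,T]$. A minimax solution: $\varphi$ non-anticipative, continuous, $\varphi(T,\cdot)=\sigma$, and for every $(t,x(\cdot))\in[0,T)\times C([-h,T],\mathbb{R}^n)$, $s\in\mathbb{R}^n$ there is $y(\cdot)\in Y(t,x(\cdot))$ with $\varphi(\tau,y(\cdot))-\varphi(t,x(\cdot))=\langle s,y(\tau)-x(t)\rangle-\int_t^\tau H(\xi,y(\cdot),s)\,d\xi$ for all $\tau\in[t,T]$. *)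

theory Defs
  imports "HOL-Analysis.Analysis"
begin

text \<open>Elements of C([-h,T],R^n) are represented canonically by functions
  real => 'a that are continuous on [-h,T] and equal to 0 outside [-h,T].\<close>
definition Cspace :: "real \<Rightarrow> real \<Rightarrow> (real \<Rightarrow> 'a::euclidean_space) set" where
  "Cspace h T = {x. continuous_on {-h..T} x \<and> (\<forall>s. s \<notin> {-h..T} \<longrightarrow> x s = 0)}"

definition supn :: "real \<Rightarrow> real \<Rightarrow> (real \<Rightarrow> 'a::euclidean_space) \<Rightarrow> real" where
  "supn a b x = Sup ((\<lambda>s. norm (x s)) ` {a..b})"

definition cdist :: "real \<Rightarrow> real \<Rightarrow> real \<Rightarrow> (real \<Rightarrow> 'a::euclidean_space) \<Rightarrow> real \<Rightarrow> (real \<Rightarrow> 'a) \<Rightarrow> real" where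
  "cdist h T t x \<tau> y = \<bar>t - \<tau>\<bar> + supn (-h) T (\<lambda>s. x s - y s)"

definition Lip_set :: "real \<Rightarrow> real \<Rightarrow> real \<Rightarrow> (real \<Rightarrow> 'a::euclidean_space) \<Rightarrow> (real \<Rightarrow> 'a) set" where
  "Lip_set h T t x = {y \<in> Cspace h T. (\<forall>s\<in>{-h..t}. y s = x s) \<and> (\<exists>L. L-lipschitz_on {t..T} y)}"

definition Y_set :: "real \<Rightarrow> real \<Rightarrow> real \<Rightarrow> real \<Rightarrow> (real \<Rightarrow> 'a::euclidean_space) \<Rightarrow> (real \<Rightarrow> 'a) set" where
  "Y_set h T c t x = {y \<in> Lip_set h T t x.
     AE \<tau> in lborel. \<tau> \<in> {t..T} \<longrightarrow>
       (\<exists>v. (y has_vector_derivative v) (at \<tau> within {t..T}) \<and> norm v \<le> c * (1 + supn (-h) \<tau> y))}"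

definition nonanticipative :: "real \<Rightarrow> real \<Rightarrow> (real \<Rightarrow> (real \<Rightarrow> 'a::euclidean_space) \<Rightarrow> real) \<Rightarrow> bool" where
  "nonanticipative h T \<phi> \<longleftrightarrow> (\<forall>t\<in>{0..<T}. \<forall>x\<in>Cspace h T. \<forall>y\<in>Cspace h T.
     (\<forall>s\<in>{-h..t}. x s = y s) \<longrightarrow> \<phi> t x = \<phi> t y)"

definition cont_C :: "real \<Rightarrow> real \<Rightarrow> real set \<Rightarrow> (real \<Rightarrow> (real \<Rightarrow> 'a::euclidean_space) \<Rightarrow> 'b::metric_space) \<Rightarrow> bool" where
  "cont_C h T S f \<longleftrightarrow> (\<forall>t\<in>S. \<forall>x\<in>Cspace h T. \<forall>\<epsilon>>0. \<exists>\<delta>>0. \<forall>\<tau>\<in>S. \<forall>y\<in>Cspace h T.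
     cdist h T t x \<tau> y < \<delta> \<longrightarrow> dist (f \<tau> y) (f t x) < \<epsilon>)"

definition has_ci_deriv :: "real \<Rightarrow> real \<Rightarrow> (real \<Rightarrow> (real \<Rightarrow> 'a::euclidean_space) \<Rightarrow> real) \<Rightarrow> real \<Rightarrow> 'a \<Rightarrow> real \<Rightarrow> (real \<Rightarrow> 'a) \<Rightarrow> bool" where
  "has_ci_deriv h T \<phi> a b t x \<longleftrightarrow> (\<forall>y\<in>Lip_set h T t x.
     ((\<lambda>\<tau>. (\<phi> \<tau> y - \<phi> t x - a * (\<tau> - t) - b \<bullet> (y \<tau> - x t)) / (\<tau> - t)) \<longlongrightarrow> 0) (at t within {t<..T}))"

definition ci_smooth :: "real \<Rightarrow> real \<Rightarrow> (real \<Rightarrow> (real \<Rightarrow> 'a::euclidean_space) \<Rightarrow> real) \<Rightarrow>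
    (real \<Rightarrow> (real \<Rightarrow> 'a) \<Rightarrow> real) \<Rightarrow> (real \<Rightarrow> (real \<Rightarrow> 'a) \<Rightarrow> 'a) \<Rightarrow> bool" where
  "ci_smooth h T \<psi> Dt Dx \<longleftrightarrow> cont_C h T {0..T} \<psi> \<and>
     (\<forall>t\<in>{0..<T}. \<forall>x\<in>Cspace h T. has_ci_deriv h T \<psi> (Dt t x) (Dx t x) t x) \<and>
     cont_C h T {0..<T} Dt \<and> cont_C h T {0..<T} Dx"

definition compact_C :: "real \<Rightarrow> real \<Rightarrow> (real \<Rightarrow> 'a::euclidean_space) set \<Rightarrow> bool" where
  "compact_C h T D \<longleftrightarrow> D \<subseteq> Cspace h T \<and> (\<forall>f::nat \<Rightarrow> real \<Rightarrow> 'a. (\<forall>k. f k \<in> D) \<longrightarrow>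
     (\<exists>(r::nat\<Rightarrow>nat) z. strict_mono r \<and> z \<in> D \<and> ((\<lambda>k. supn (-h) T (\<lambda>s. f (r k) s - z s)) \<longlonglongrightarrow> 0)))"

definition B1 :: "real \<Rightarrow> real \<Rightarrow> (real \<Rightarrow> (real \<Rightarrow> 'a::euclidean_space) \<Rightarrow> 'a \<Rightarrow> real) \<Rightarrow> ((real \<Rightarrow> 'a) \<Rightarrow> real) \<Rightarrow> bool" where
  "B1 h T H \<sigma> \<longleftrightarrow>
    (\<forall>t\<in>{0..T}. \<forall>x\<in>Cspace h T. \<forall>s. \<forall>\<epsilon>>0. \<exists>\<delta>>0. \<forall>\<tau>\<in>{0..T}. \<forall>y\<in>Cspace h T. \<forall>r.
       cdist h T t x \<tau> y + norm (s - r) < \<delta> \<longrightarrow> \<bar>H \<tau> y r - H t x s\<bar> < \<epsilon>) \<and>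
    (\<forall>x\<in>Cspace h T. \<forall>\<epsilon>>0. \<exists>\<delta>>0. \<forall>y\<in>Cspace h T.
       supn (-h) T (\<lambda>s. x s - y s) < \<delta> \<longrightarrow> \<bar>\<sigma> y - \<sigma> x\<bar> < \<epsilon>)"

definition B2 :: "real \<Rightarrow> real \<Rightarrow> real \<Rightarrow> (real \<Rightarrow> (real \<Rightarrow> 'a::euclidean_space) \<Rightarrow> 'a \<Rightarrow> real) \<Rightarrow> bool" where
  "B2 h T c H \<longleftrightarrow> c > 0 \<and> (\<forall>t\<in>{0..T}. \<forall>x\<in>Cspace h T. \<forall>s r.
     \<bar>H t x s - H t x r\<bar> \<le> c * (1 + supn (-h) t x) * norm (s - r))"

definition B3 :: "real \<Rightarrow> real \<Rightarrow> (real \<Rightarrow> (real \<Rightarrow> 'a::euclidean_space) \<Rightarrow> 'a \<Rightarrow> real) \<Rightarrow> bool" where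
  "B3 h T H \<longleftrightarrow> (\<forall>D. compact_C h T D \<longrightarrow> (\<exists>L>0. \<forall>t\<in>{0..T}. \<forall>x\<in>D. \<forall>y\<in>D. \<forall>s.
     \<bar>H t x s - H t y s\<bar> \<le> L * (1 + norm s) * supn (-h) t (\<lambda>\<xi>. x \<xi> - y \<xi>)))"

definition minimax_solution :: "real \<Rightarrow> real \<Rightarrow> real \<Rightarrow> (real \<Rightarrow> (real \<Rightarrow> 'a::euclidean_space) \<Rightarrow> 'a \<Rightarrow> real) \<Rightarrow>
    ((real \<Rightarrow> 'a) \<Rightarrow> real) \<Rightarrow> (real \<Rightarrow> (real \<Rightarrow> 'a) \<Rightarrow> real) \<Rightarrow> bool" where
  "minimax_solution h T c H \<sigma> \<phi> \<longleftrightarrow> nonanticipative h T \<phi> \<and> cont_C h T {0..T} \<phi> \<and>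
     (\<forall>x\<in>Cspace h T. \<phi> T x = \<sigma> x) \<and>
     (\<forall>t\<in>{0..<T}. \<forall>x\<in>Cspace h T. \<forall>s. \<exists>y\<in>Y_set h T c t x. \<forall>\<tau>\<in>{t..T}.
        \<phi> \<tau> y - \<phi> t x = s \<bullet> (y \<tau> - x t) - integral {t..\<tau>} (\<lambda>\<xi>. H \<xi> y s))"

definition loc_min_C :: "real \<Rightarrow> real \<Rightarrow> (real \<Rightarrow> (real \<Rightarrow> 'a::euclidean_space) \<Rightarrow> real) \<Rightarrow> real \<Rightarrow> (real \<Rightarrow> 'a) \<Rightarrow> bool" where
  "loc_min_C h T f t x \<longleftrightarrow> (\<exists>\<delta>>0. \<forall>\<tau>\<in>{0..T}. \<forall>y\<in>Cspace h T. cdist h T t x \<tau> y < \<delta> \<longrightarrow> f t x \<le> f \<tau> y)"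

definition loc_max_C :: "real \<Rightarrow> real \<Rightarrow> (real \<Rightarrow> (real \<Rightarrow> 'a::euclidean_space) \<Rightarrow> real) \<Rightarrow> real \<Rightarrow> (real \<Rightarrow> 'a) \<Rightarrow> bool" where
  "loc_max_C h T f t x \<longleftrightarrow> (\<exists>\<delta>>0. \<forall>\<tau>\<in>{0..T}. \<forall>y\<in>Cspace h T. cdist h T t x \<tau> y < \<delta> \<longrightarrow> f \<tau> y \<le> f t x)"

end

theory Submission
  imports Defs
begin

text \<open>Choose \<open>s = \<nabla>\<psi>(t,x)\<close> in the defining property of the minimax solution. Along the
  resulting path \<open>y\<close>, \<open>\<phi>\<close> changes by \<open>\<langle>s, y(\<tau>) - x(t)\<rangle> - \<integral>H\<close>, while \<open>\<psi>\<close> changes by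
  \<open>\<partial>\<^sub>t\<psi>\<cdot>(\<tau> - t) + \<langle>s, y(\<tau>) - x(t)\<rangle> + o(\<tau> - t)\<close>; hence the right difference quotient of
  \<open>\<phi> - \<psi>\<close> along \<open>y\<close> tends to \<open>-(\<partial>\<^sub>t\<psi> + H(t,y,s))\<close>, and \<open>H(t,y,s) = H(t,x,s)\<close> by (B.3)
  because \<open>y = x\<close> on \<open>[-h,t]\<close>. The path \<open>y\<close> need not stay close to \<open>x\<close> on all of \<open>[-h,T]\<close>,
  but \<open>\<phi>\<close> and \<open>\<psi>\<close> are non-anticipative (for \<open>\<psi>\<close> this follows from ci-differentiability),
  so at time \<open>\<tau>\<close> the path \<open>y\<close> may be replaced by the path that follows \<open>y\<close> up to \<open>\<tau>\<close> and the
  increments of \<open>x\<close> afterwards, which is close to \<open>x\<close>. The local extremum of \<open>\<phi> - \<psi>\<close> at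
  \<open>(t,x)\<close> therefore fixes the sign of the limit.\<close>

lemma supn_eq_0:
  assumes "a \<le> b" "\<And>s. s \<in> {a..b} \<Longrightarrow> f s = 0"
  shows "supn a b f = 0"
proof -
  have "(\<lambda>s. norm (f s)) ` {a..b} = {0}" using assms by force
  then show ?thesis unfolding supn_def by simp
qed

lemma supn_le:
  assumes "a \<le> b" "\<And>s. s \<in> {a..b} \<Longrightarrow> norm (f s) \<le> e"
  shows "supn a b f \<le> e"
  unfolding supn_def using assms by (intro cSup_least) auto

lemma cdist_same_path: "-h \<le> T \<Longrightarrow> cdist h T t y \<tau> y = \<bar>t - \<tau>\<bar>"
  unfolding cdist_def by (subst supn_eq_0) auto

lemma finite_imp_compact_C:
  assumes "finite D" "D \<subseteq> Cspace h T" "-h \<le> T"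
  shows "compact_C h T D"
proof -
  have "\<exists>r z. strict_mono r \<and> z \<in> D \<and> ((\<lambda>k. supn (-h) T (\<lambda>s. f (r k) s - z s)) \<longlonglongrightarrow> 0)"
    if f: "\<forall>k. f k \<in> D" for f :: "nat \<Rightarrow> real \<Rightarrow> 'a"
  proof -
    have "finite (range f)" using f assms(1) by (meson finite_subset image_subset_iff)
    then obtain z where z: "z \<in> range f" "infinite (f -` {z})" by (rule inf_img_fin_domE) simp
    then obtain r :: "nat \<Rightarrow> nat" where r: "strict_mono r" "\<And>k. r k \<in> f -` {z}" using infinite_enumerate by blast
    have "supn (-h) T (\<lambda>s. f (r k) s - z s) = 0" for k
      using r(2)[of k] assms(3) by (intro supn_eq_0) auto
    then show ?thesis using r(1) z(1) f by (intro exI[of _ r] exI[of _ z]) auto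
  qed
  then show ?thesis using assms(2) unfolding compact_C_def by blast
qed

lemma cont_C_imp_continuous_along_path:
  assumes "cont_C h T S f" "y \<in> Cspace h T" "-h \<le> T"
  shows "continuous_on S (\<lambda>\<tau>. f \<tau> y)"
  unfolding continuous_on_iff
proof (intro ballI allI impI)
  fix t e assume "t \<in> S" "(0::real) < e"
  then obtain d where "d > 0" and d: "\<forall>\<tau>\<in>S. cdist h T t y \<tau> y < d \<longrightarrow> dist (f \<tau> y) (f t y) < e"
    using assms(1,2) unfolding cont_C_def by blast
  moreover have "cdist h T t y \<tau> y < d" if "dist \<tau> t < d" for \<tau>
    using that cdist_same_path[OF assms(3), of t y \<tau>] by (simp add: dist_real_def abs_minus_commute)
  ultimately show "\<exists>d>0. \<forall>\<tau>\<in>S. dist \<tau> t < d \<longrightarrow> dist (f \<tau> y) (f t y) < e"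
    by blast
qed

lemma B1_imp_cont_C_H:
  assumes "B1 h T H \<sigma>"
  shows "cont_C h T {0..T} (\<lambda>\<tau> y. H \<tau> y s)"
  unfolding cont_C_def
proof (intro ballI allI impI)
  fix t and x :: "real \<Rightarrow> 'a" and e :: real assume "t \<in> {0..T}" "x \<in> Cspace h T" "0 < e"
  then obtain d where "d > 0" and d: "\<forall>\<tau>\<in>{0..T}. \<forall>y\<in>Cspace h T. \<forall>r.
      cdist h T t x \<tau> y + norm (s - r) < d \<longrightarrow> \<bar>H \<tau> y r - H t x s\<bar> < e"
    using conjunct1[OF assms[unfolded B1_def], rule_format] by metis
  then show "\<exists>d>0. \<forall>\<tau>\<in>{0..T}. \<forall>y\<in>Cspace h T.
      cdist h T t x \<tau> y < d \<longrightarrow> dist (H \<tau> y s) (H t x s) < e"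
    by (intro exI[of _ d]) (simp add: dist_real_def)
qed

lemma B3_imp_H_nonanticipative:
  assumes "B3 h T H" "x \<in> Cspace h T" "y \<in> Cspace h T" "0 \<le> h" "t \<in> {0..T}"
    and "\<forall>\<xi>\<in>{-h..t}. x \<xi> = y \<xi>"
  shows "H t x s = H t y s"
proof -
  have "compact_C h T {x, y}" using assms(2-5) by (intro finite_imp_compact_C) auto
  then obtain L where "\<forall>t\<in>{0..T}. \<forall>x1\<in>{x, y}. \<forall>y1\<in>{x, y}. \<forall>s.
      \<bar>H t x1 s - H t y1 s\<bar> \<le> L * (1 + norm s) * supn (-h) t (\<lambda>\<xi>. x1 \<xi> - y1 \<xi>)"
    using assms(1)[unfolded B3_def, rule_format] by metis
  then have "\<bar>H t x s - H t y s\<bar> \<le> L * (1 + norm s) * supn (-h) t (\<lambda>\<xi>. x \<xi> - y \<xi>)"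
    using assms(5) by blast
  moreover have "supn (-h) t (\<lambda>\<xi>. x \<xi> - y \<xi>) = 0"
    using assms(4-6) by (intro supn_eq_0) auto
  ultimately show ?thesis by simp
qed

definition stopped_path :: "real \<Rightarrow> real \<Rightarrow> real \<Rightarrow> (real \<Rightarrow> 'a::euclidean_space) \<Rightarrow> real \<Rightarrow> 'a" where
  "stopped_path h T \<tau> z s = (if s \<in> {-h..T} then z (min s \<tau>) else 0)"

lemma stopped_path_in_Lip_set:
  assumes "z \<in> Cspace h T" "\<tau> \<in> {-h..T}"
  shows "stopped_path h T \<tau> z \<in> Lip_set h T \<tau> z"
proof -
  have cz: "continuous_on {-h..T} z" using assms(1) unfolding Cspace_def by auto
  have "continuous_on {-h..T} (\<lambda>s. z (min s \<tau>))"
    by (rule continuous_on_compose2[OF cz]) (use assms(2) in \<open>auto intro!: continuous_intros\<close>)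
  then have "continuous_on {-h..T} (stopped_path h T \<tau> z)"
    by (rule continuous_on_eq) (simp add: stopped_path_def)
  moreover have "0-lipschitz_on {\<tau>..T} (stopped_path h T \<tau> z)"
    unfolding lipschitz_on_def stopped_path_def using assms(2) by auto
  ultimately show ?thesis
    unfolding Lip_set_def Cspace_def using assms(2) by (auto simp: stopped_path_def)
qed

text \<open>A stopped path is constant after \<open>\<tau>\<close>, so the ci-expansion at \<open>(\<tau>,z)\<close> along it says
  \<open>\<psi>(\<tau>',w) \<rightarrow> \<psi>(\<tau>,z)\<close> as \<open>\<tau>' \<down> \<tau>\<close>, while continuity gives \<open>\<psi>(\<tau>',w) \<rightarrow> \<psi>(\<tau>,w)\<close>.\<close>
lemma ci_deriv_stopped_path_eq:
  assumes d: "has_ci_deriv h T \<psi> a b \<tau> z" and cont: "cont_C h T {0..T} \<psi>"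
    and \<tau>: "\<tau> \<in> {0..<T}" "-h \<le> \<tau>" and z: "z \<in> Cspace h T"
  shows "\<psi> \<tau> (stopped_path h T \<tau> z) = \<psi> \<tau> z"
proof -
  define w where "w = stopped_path h T \<tau> z"
  let ?F = "at \<tau> within {\<tau><..T}"
  let ?q = "\<lambda>\<tau>'. (\<psi> \<tau>' w - \<psi> \<tau> z - a * (\<tau>' - \<tau>) - b \<bullet> (w \<tau>' - z \<tau>)) / (\<tau>' - \<tau>)"
  have wL: "w \<in> Lip_set h T \<tau> z" unfolding w_def using \<tau> z by (intro stopped_path_in_Lip_set) auto
  then have wC: "w \<in> Cspace h T" unfolding Lip_set_def by auto
  have "(?q \<longlongrightarrow> 0) ?F" using d wL unfolding has_ci_deriv_def by blast
  moreover have lin: "((\<lambda>\<tau>'. \<tau>' - \<tau>) \<longlongrightarrow> 0) ?F"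
    by (auto intro!: tendsto_eq_intros)
  ultimately have "((\<lambda>\<tau>'. ?q \<tau>' * (\<tau>' - \<tau>) + a * (\<tau>' - \<tau>)) \<longlongrightarrow> 0 * 0 + a * 0) ?F"
    by (intro tendsto_add tendsto_mult tendsto_const)
  moreover have "eventually (\<lambda>\<tau>'. ?q \<tau>' * (\<tau>' - \<tau>) + a * (\<tau>' - \<tau>) = \<psi> \<tau>' w - \<psi> \<tau> z) ?F"
    unfolding eventually_at_filter using \<tau>
    by (intro always_eventually) (simp add: w_def stopped_path_def)
  ultimately have "((\<lambda>\<tau>'. \<psi> \<tau>' w - \<psi> \<tau> z) \<longlongrightarrow> 0) ?F"
    by (simp add: Lim_transform_eventually)
  moreover have "((\<lambda>\<tau>'. \<psi> \<tau>' w) \<longlongrightarrow> \<psi> \<tau> w) (at \<tau> within {0..T})"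
    using cont_C_imp_continuous_along_path[OF cont wC] \<tau> by (simp add: continuous_on_def)
  then have "((\<lambda>\<tau>'. \<psi> \<tau>' w) \<longlongrightarrow> \<psi> \<tau> w) ?F"
    by (rule tendsto_within_subset) (use \<tau> in auto)
  then have "((\<lambda>\<tau>'. \<psi> \<tau>' w - \<psi> \<tau> z) \<longlongrightarrow> \<psi> \<tau> w - \<psi> \<tau> z) ?F"
    by (intro tendsto_diff tendsto_const)
  moreover have "?F \<noteq> bot" using \<tau> by (simp add: trivial_limit_within)
  ultimately have "\<psi> \<tau> w - \<psi> \<tau> z = 0" by (metis tendsto_unique)
  then show ?thesis unfolding w_def by simp
qed

lemma nonanticipativeD:
  assumes "nonanticipative h T \<phi>" "t \<in> {0..<T}" "x \<in> Cspace h T" "y \<in> Cspace h T"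
    and "\<And>s. s \<in> {-h..t} \<Longrightarrow> x s = y s"
  shows "\<phi> t x = \<phi> t y"
  using assms unfolding nonanticipative_def by blast

lemma ci_smooth_imp_nonanticipative:
  assumes "ci_smooth h T \<psi> Dt Dx" "0 \<le> h"
  shows "nonanticipative h T \<psi>"
  unfolding nonanticipative_def
proof (intro ballI impI)
  fix \<tau> and y1 y2 :: "real \<Rightarrow> 'a" assume \<tau>: "\<tau> \<in> {0..<T}" and y: "y1 \<in> Cspace h T" "y2 \<in> Cspace h T"
    and eq: "\<forall>s\<in>{-h..\<tau>}. y1 s = y2 s"
  have "\<psi> \<tau> y = \<psi> \<tau> (stopped_path h T \<tau> y)" if "y \<in> Cspace h T" for y :: "real \<Rightarrow> 'a"
    using assms \<tau> that by (intro ci_deriv_stopped_path_eq[symmetric]) (auto simp: ci_smooth_def)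
  moreover have "stopped_path h T \<tau> y1 = stopped_path h T \<tau> y2"
    using eq \<tau> assms(2) by (auto simp: stopped_path_def fun_eq_iff)
  ultimately show "\<psi> \<tau> y1 = \<psi> \<tau> y2" using y by metis
qed

lemma nonanticipative_diff:
  assumes "nonanticipative h T \<phi>" "nonanticipative h T \<psi>"
  shows "nonanticipative h T (\<lambda>\<tau> y. \<phi> \<tau> y - \<psi> \<tau> y)"
  using nonanticipativeD[OF assms(1)] nonanticipativeD[OF assms(2)]
  unfolding nonanticipative_def by metis

definition splice_path :: "real \<Rightarrow> real \<Rightarrow> real \<Rightarrow> (real \<Rightarrow> 'a::euclidean_space) \<Rightarrow> (real \<Rightarrow> 'a) \<Rightarrow> real \<Rightarrow> 'a" where
  "splice_path h T \<tau> y x s = (if s \<in> {-h..T} then if s \<le> \<tau> then y s else x s + (y \<tau> - x \<tau>) else 0)"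

lemma splice_path_in_Cspace:
  assumes "x \<in> Cspace h T" "y \<in> Cspace h T"
  shows "splice_path h T \<tau> y x \<in> Cspace h T"
proof -
  have cx: "continuous_on {-h..T} x" and cy: "continuous_on {-h..T} y"
    using assms unfolding Cspace_def by auto
  have "continuous_on {-h..T} (\<lambda>s. if s \<le> \<tau> then y s else x s + (y \<tau> - x \<tau>))"
  proof (rule continuous_on_cases_1)
    show "continuous_on {s \<in> {-h..T}. s \<le> \<tau>} y" by (rule continuous_on_subset[OF cy]) auto
    show "continuous_on {s \<in> {-h..T}. \<tau> \<le> s} (\<lambda>s. x s + (y \<tau> - x \<tau>))"
      by (intro continuous_on_add continuous_on_const continuous_on_subset[OF cx]) auto
  qed simp
  then have "continuous_on {-h..T} (splice_path h T \<tau> y x)"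
    by (rule continuous_on_eq) (simp add: splice_path_def)
  then show ?thesis unfolding Cspace_def by (simp add: splice_path_def)
qed

lemma cdist_splice_path_eventually_less:
  assumes x: "x \<in> Cspace h T" and y: "y \<in> Cspace h T" and t: "t \<in> {-h..T}"
    and yx: "\<forall>s\<in>{-h..t}. y s = x s" and \<delta>: "\<delta> > 0"
  shows "eventually (\<lambda>\<tau>. cdist h T t x \<tau> (splice_path h T \<tau> y x) < \<delta>) (at t within {t<..T})"
proof -
  have "continuous_on {-h..T} (\<lambda>s. x s - y s)"
    using x y unfolding Cspace_def by (auto intro: continuous_on_diff)
  then obtain d where "d > 0"
    and d: "\<And>s. s \<in> {-h..T} \<Longrightarrow> dist s t < d \<Longrightarrow> dist (x s - y s) (x t - y t) < \<delta>/2"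
    using t \<delta> unfolding continuous_on_iff by (meson half_gt_zero)
  have near: "norm (x s - y s) < \<delta>/2" if "s \<in> {-h..T}" "dist s t < d" for s
    using d[OF that] yx t by (simp add: dist_norm)
  have "cdist h T t x \<tau> (splice_path h T \<tau> y x) < \<delta>"
    if \<tau>: "t < \<tau>" "\<tau> \<le> T" "dist \<tau> t < min d (\<delta>/2)" for \<tau>
  proof -
    have "supn (-h) T (\<lambda>s. x s - splice_path h T \<tau> y x s) \<le> \<delta>/2"
    proof (rule supn_le)
      show "-h \<le> T" using t by simp
      fix s assume s: "s \<in> {-h..T}"
      consider "s \<le> t" | "t < s" "s \<le> \<tau>" | "\<tau> < s" by linarith
      then show "norm (x s - splice_path h T \<tau> y x s) \<le> \<delta>/2"
      proof cases
        case 1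
        then show ?thesis using s yx \<tau> \<delta> by (simp add: splice_path_def)
      next
        case 2
        then show ?thesis using near[OF s] s \<tau> by (simp add: splice_path_def dist_real_def)
      next
        case 3
        have "norm (x \<tau> - y \<tau>) < \<delta>/2" using near \<tau> t by (simp add: dist_real_def)
        then show ?thesis using s 3 by (simp add: splice_path_def norm_minus_commute)
      qed
    qed
    moreover have "\<bar>t - \<tau>\<bar> < \<delta>/2" using \<tau> by (simp add: dist_real_def)
    ultimately show ?thesis unfolding cdist_def by linarith
  qed
  then show ?thesis
    unfolding eventually_at using \<open>d > 0\<close> \<delta> by (intro exI[of _ "min d (\<delta>/2)"]) auto
qed

lemma eventually_along_path_if_near:
  assumes f: "nonanticipative h T f" and "\<delta> > 0"
    and near: "\<And>\<tau> z. \<tau> \<in> {0..T} \<Longrightarrow> z \<in> Cspace h T \<Longrightarrow> cdist h T t x \<tau> z < \<delta> \<Longrightarrow> P (f \<tau> z)"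
    and t: "t \<in> {0..<T}" and h: "0 \<le> h" and x: "x \<in> Cspace h T" and y: "y \<in> Cspace h T"
    and yx: "\<forall>s\<in>{-h..t}. y s = x s"
  shows "eventually (\<lambda>\<tau>. P (f \<tau> y)) (at t within {t<..T})"
proof -
  have "eventually (\<lambda>\<tau>. \<tau> \<in> {t<..T}) (at t within {t<..T})"
    by (simp add: eventually_at_filter)
  moreover have "eventually (\<lambda>\<tau>. \<tau> < T) (at t within {t<..T})"
    unfolding eventually_at using t by (intro exI[of _ "T - t"]) (auto simp: dist_real_def)
  moreover have "eventually (\<lambda>\<tau>. cdist h T t x \<tau> (splice_path h T \<tau> y x) < \<delta>) (at t within {t<..T})"
    using x y t h yx \<open>\<delta> > 0\<close> by (intro cdist_splice_path_eventually_less) auto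
  ultimately show ?thesis
  proof eventually_elim
    case (elim \<tau>)
    have zC: "splice_path h T \<tau> y x \<in> Cspace h T" using x y by (rule splice_path_in_Cspace)
    have "f \<tau> (splice_path h T \<tau> y x) = f \<tau> y"
      using elim t by (intro nonanticipativeD[OF f _ zC y]) (auto simp: splice_path_def)
    then show ?case using near[OF _ zC elim(3)] elim t by auto
  qed
qed

lemma loc_min_C_right_quotient_nonneg:
  assumes f: "nonanticipative h T f" and min: "loc_min_C h T f t x"
    and t: "t \<in> {0..<T}" and h: "0 \<le> h" and x: "x \<in> Cspace h T" and y: "y \<in> Lip_set h T t x"
    and lim: "((\<lambda>\<tau>. (f \<tau> y - f t x) / (\<tau> - t)) \<longlongrightarrow> L) (at t within {t<..T})"
  shows "0 \<le> L"
proof (rule tendsto_lowerbound[OF lim])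
  obtain \<delta> where "\<delta> > 0" and "\<And>\<tau> z. \<tau> \<in> {0..T} \<Longrightarrow> z \<in> Cspace h T \<Longrightarrow>
      cdist h T t x \<tau> z < \<delta> \<Longrightarrow> f t x \<le> f \<tau> z"
    using min unfolding loc_min_C_def by blast
  then have "eventually (\<lambda>\<tau>. f t x \<le> f \<tau> y) (at t within {t<..T})"
    using x y t h by (intro eventually_along_path_if_near[OF f, of \<delta>]) (auto simp: Lip_set_def)
  moreover have "eventually (\<lambda>\<tau>. \<tau> \<in> {t<..T}) (at t within {t<..T})"
    by (simp add: eventually_at_filter)
  ultimately show "eventually (\<lambda>\<tau>. 0 \<le> (f \<tau> y - f t x) / (\<tau> - t)) (at t within {t<..T})"
    by eventually_elim simp
  show "at t within {t<..T} \<noteq> bot" using t by (simp add: trivial_limit_within)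
qed

lemma loc_max_C_right_quotient_nonpos:
  assumes f: "nonanticipative h T f" and max: "loc_max_C h T f t x"
    and t: "t \<in> {0..<T}" and h: "0 \<le> h" and x: "x \<in> Cspace h T" and y: "y \<in> Lip_set h T t x"
    and lim: "((\<lambda>\<tau>. (f \<tau> y - f t x) / (\<tau> - t)) \<longlongrightarrow> L) (at t within {t<..T})"
  shows "L \<le> 0"
proof (rule tendsto_upperbound[OF lim])
  obtain \<delta> where "\<delta> > 0" and "\<And>\<tau> z. \<tau> \<in> {0..T} \<Longrightarrow> z \<in> Cspace h T \<Longrightarrow>
      cdist h T t x \<tau> z < \<delta> \<Longrightarrow> f \<tau> z \<le> f t x"
    using max unfolding loc_max_C_def by blast
  then have "eventually (\<lambda>\<tau>. f \<tau> y \<le> f t x) (at t within {t<..T})"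
    using x y t h by (intro eventually_along_path_if_near[OF f, of \<delta>]) (auto simp: Lip_set_def)
  moreover have "eventually (\<lambda>\<tau>. \<tau> \<in> {t<..T}) (at t within {t<..T})"
    by (simp add: eventually_at_filter)
  ultimately show "eventually (\<lambda>\<tau>. (f \<tau> y - f t x) / (\<tau> - t) \<le> 0) (at t within {t<..T})"
    by eventually_elim (simp add: divide_nonpos_pos)
  show "at t within {t<..T} \<noteq> bot" using t by (simp add: trivial_limit_within)
qed

lemma integral_right_quotient_tendsto:
  fixes g :: "real \<Rightarrow> real"
  assumes "continuous_on {t..T} g" "t < T"
  shows "((\<lambda>\<tau>. integral {t..\<tau>} g / (\<tau> - t)) \<longlongrightarrow> g t) (at t within {t<..T})"
proof -
  have "((\<lambda>\<tau>. integral {t..\<tau>} g) has_real_derivative g t) (at t within {t..T})"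
    using assms by (intro integral_has_real_derivative) auto
  then have "((\<lambda>\<tau>. (integral {t..\<tau>} g - integral {t..t} g) / (\<tau> - t)) \<longlongrightarrow> g t) (at t within {t..T})"
    by (simp add: has_field_derivative_iff)
  then show ?thesis by (simp add: tendsto_within_subset[of _ _ _ "{t..T}"] subset_eq)
qed

lemma right_quotient_along_characteristic:
  fixes g :: "real \<Rightarrow> real"
  assumes d: "has_ci_deriv h T \<psi> a b t x" and y: "y \<in> Lip_set h T t x"
    and g: "continuous_on {t..T} g" and t: "t < T"
    and char: "\<And>\<tau>. \<tau> \<in> {t..T} \<Longrightarrow> \<phi> \<tau> y - \<phi> t x = b \<bullet> (y \<tau> - x t) - integral {t..\<tau>} g"
  shows "((\<lambda>\<tau>. ((\<phi> \<tau> y - \<psi> \<tau> y) - (\<phi> t x - \<psi> t x)) / (\<tau> - t)) \<longlongrightarrow> - (a + g t))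
    (at t within {t<..T})"
proof -
  let ?F = "at t within {t<..T}"
  let ?I = "\<lambda>\<tau>. integral {t..\<tau>} g"
  let ?R = "\<lambda>\<tau>. \<psi> \<tau> y - \<psi> t x - a * (\<tau> - t) - b \<bullet> (y \<tau> - x t)"
  have "((\<lambda>\<tau>. ?I \<tau> / (\<tau> - t)) \<longlongrightarrow> g t) ?F"
    using g t by (rule integral_right_quotient_tendsto)
  moreover have "((\<lambda>\<tau>. ?R \<tau> / (\<tau> - t)) \<longlongrightarrow> 0) ?F"
    using d y unfolding has_ci_deriv_def by blast
  ultimately have "((\<lambda>\<tau>. - (?I \<tau> / (\<tau> - t)) - a - ?R \<tau> / (\<tau> - t)) \<longlongrightarrow> - g t - a - 0) ?F"
    by (intro tendsto_diff tendsto_minus tendsto_const)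
  moreover have "eventually (\<lambda>\<tau>. - (?I \<tau> / (\<tau> - t)) - a - ?R \<tau> / (\<tau> - t)
      = ((\<phi> \<tau> y - \<psi> \<tau> y) - (\<phi> t x - \<psi> t x)) / (\<tau> - t)) ?F"
    unfolding eventually_at_filter
  proof (intro always_eventually allI impI)
    fix \<tau> assume "\<tau> \<noteq> t" "\<tau> \<in> {t<..T}"
    then have "\<tau> - t \<noteq> 0" and "\<phi> \<tau> y - \<phi> t x = b \<bullet> (y \<tau> - x t) - ?I \<tau>" by (auto intro: char)
    then have eq: "- ?I \<tau> - a * (\<tau> - t) - ?R \<tau> = (\<phi> \<tau> y - \<psi> \<tau> y) - (\<phi> t x - \<psi> t x)"
      by linarith
    have "- (I / d) - a - R / d = (- I - a * d - R) / d" if "d \<noteq> 0" for I R d :: real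
      by (simp only: diff_divide_distrib minus_divide_left nonzero_mult_div_cancel_right[OF that])
    from this[OF \<open>\<tau> - t \<noteq> 0\<close>]
    show "- (?I \<tau> / (\<tau> - t)) - a - ?R \<tau> / (\<tau> - t)
        = ((\<phi> \<tau> y - \<psi> \<tau> y) - (\<phi> t x - \<psi> t x)) / (\<tau> - t)"
      unfolding eq[symmetric] .
  qed
  ultimately have "((\<lambda>\<tau>. ((\<phi> \<tau> y - \<psi> \<tau> y) - (\<phi> t x - \<psi> t x)) / (\<tau> - t)) \<longlongrightarrow> - g t - a - 0) ?F"
    by (rule Lim_transform_eventually)
  moreover have "- g t - a - 0 = - (a + g t)" by simp
  ultimately show ?thesis by (simp only:)
qed

lemma minimax_characteristic_right_quotient:
  assumes h: "0 \<le> h" and B1: "B1 h T H \<sigma>" and B3: "B3 h T H"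
    and mm: "minimax_solution h T c H \<sigma> \<phi>" and sm: "ci_smooth h T \<psi> Dt Dx"
    and t: "t \<in> {0..<T}" and x: "x \<in> Cspace h T"
  obtains y where "y \<in> Lip_set h T t x"
    "((\<lambda>\<tau>. ((\<phi> \<tau> y - \<psi> \<tau> y) - (\<phi> t x - \<psi> t x)) / (\<tau> - t))
        \<longlongrightarrow> -(Dt t x + H t x (Dx t x))) (at t within {t<..T})"
proof -
  let ?b = "Dx t x"
  obtain y where yY: "y \<in> Y_set h T c t x" and char: "\<forall>\<tau>\<in>{t..T}.
      \<phi> \<tau> y - \<phi> t x = ?b \<bullet> (y \<tau> - x t) - integral {t..\<tau>} (\<lambda>\<xi>. H \<xi> y ?b)"
    using mm t x unfolding minimax_solution_def by blast
  have yL: "y \<in> Lip_set h T t x" using yY unfolding Y_set_def by auto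
  then have yC: "y \<in> Cspace h T" and yx: "\<forall>s\<in>{-h..t}. y s = x s" unfolding Lip_set_def by auto
  have "continuous_on {0..T} (\<lambda>\<xi>. H \<xi> y ?b)"
    using cont_C_imp_continuous_along_path[OF B1_imp_cont_C_H[OF B1] yC] t h by auto
  then have g: "continuous_on {t..T} (\<lambda>\<xi>. H \<xi> y ?b)"
    by (rule continuous_on_subset) (use t in auto)
  have d: "has_ci_deriv h T \<psi> (Dt t x) ?b t x"
    using sm t x unfolding ci_smooth_def by blast
  have "((\<lambda>\<tau>. ((\<phi> \<tau> y - \<psi> \<tau> y) - (\<phi> t x - \<psi> t x)) / (\<tau> - t))
      \<longlongrightarrow> -(Dt t x + H t y ?b)) (at t within {t<..T})"
    by (rule right_quotient_along_characteristic[where \<phi> = \<phi>, OF d yL g]) (use t char in auto)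
  moreover have "H t y ?b = H t x ?b"
    using B3_imp_H_nonanticipative[OF B3 yC x h] yx t by auto
  ultimately show ?thesis using yL that by simp
qed

theorem proposition10:
  fixes h T c :: real
    and H :: "real \<Rightarrow> (real \<Rightarrow> 'a::euclidean_space) \<Rightarrow> 'a \<Rightarrow> real"
    and \<sigma> :: "(real \<Rightarrow> 'a) \<Rightarrow> real"
    and \<phi> :: "real \<Rightarrow> (real \<Rightarrow> 'a) \<Rightarrow> real"
  assumes "h > 0" and "T > 0"
    and "B1 h T H \<sigma>" and "B2 h T c H" and "B3 h T H"
    and "minimax_solution h T c H \<sigma> \<phi>"
  shows "(\<forall>\<psi> Dt Dx t x. ci_smooth h T \<psi> Dt Dx \<and> t \<in> {0..<T} \<and> x \<in> Cspace h T \<and>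
            loc_min_C h T (\<lambda>\<tau> y. \<phi> \<tau> y - \<psi> \<tau> y) t x
            \<longrightarrow> Dt t x + H t x (Dx t x) \<le> 0) \<and>
         (\<forall>\<psi> Dt Dx t x. ci_smooth h T \<psi> Dt Dx \<and> t \<in> {0..<T} \<and> x \<in> Cspace h T \<and>
            loc_max_C h T (\<lambda>\<tau> y. \<phi> \<tau> y - \<psi> \<tau> y) t x
            \<longrightarrow> Dt t x + H t x (Dx t x) \<ge> 0)"
proof -
  have h: "0 \<le> h" using \<open>h > 0\<close> by simp
  have \<phi>: "nonanticipative h T \<phi>"
    using assms(6) unfolding minimax_solution_def by (rule conjunct1)
  have "(loc_min_C h T (\<lambda>\<tau> y. \<phi> \<tau> y - \<psi> \<tau> y) t x \<longrightarrow> Dt t x + H t x (Dx t x) \<le> 0) \<and>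
        (loc_max_C h T (\<lambda>\<tau> y. \<phi> \<tau> y - \<psi> \<tau> y) t x \<longrightarrow> Dt t x + H t x (Dx t x) \<ge> 0)"
    if sm: "ci_smooth h T \<psi> Dt Dx" and t: "t \<in> {0..<T}" and x: "x \<in> Cspace h T"
    for \<psi> :: "real \<Rightarrow> (real \<Rightarrow> 'a) \<Rightarrow> real" and Dt Dx t and x :: "real \<Rightarrow> 'a"
  proof -
    have f: "nonanticipative h T (\<lambda>\<tau> y. \<phi> \<tau> y - \<psi> \<tau> y)"
      using \<phi> ci_smooth_imp_nonanticipative[OF sm h] by (rule nonanticipative_diff)
    obtain y where y: "y \<in> Lip_set h T t x" and lim: "((\<lambda>\<tau>. ((\<phi> \<tau> y - \<psi> \<tau> y) - (\<phi> t x - \<psi> t x)) / (\<tau> - t))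
        \<longlongrightarrow> -(Dt t x + H t x (Dx t x))) (at t within {t<..T})"
      by (rule minimax_characteristic_right_quotient[OF h assms(3,5,6) sm t x])
    show ?thesis
      using loc_min_C_right_quotient_nonneg[where f = "\<lambda>\<tau> y. \<phi> \<tau> y - \<psi> \<tau> y", OF f _ t h x y lim]
        loc_max_C_right_quotient_nonpos[where f = "\<lambda>\<tau> y. \<phi> \<tau> y - \<psi> \<tau> y", OF f _ t h x y lim]
      by auto
  qed
  then show ?thesis by blast
qed

end
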